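(* Consider a two-player perfect-information game of depth $D$, together with approximate bounds $V^{\mathrm{grim}},V^{\mathrm{alt}}$ satisfying $V^{\mathrm{alt}}(s)\ge V^{\mathrm{grim}}(s)$ for all $s$, and approximate learned EPFs $\{\tilde U_s\}$ with induced strategy $\tilde\pi$, all as in the context. Suppose $L_\infty(\tilde U_s,\tilde U^{\mathrm{target}}_s)\le\epsilon$ for all $s\in\mathcal S$. Then $|R_1(\tilde\pi)-\widetilde{\mathsf{OPT}}_2|=\mathcal O(D\epsilon)$, where $\widetilde{\mathsf{OPT}}_2=\max_{\mu_2}\tilde U_{\mathrm{root}}(\mu_2)$. That is, the difference is at most $CD\epsilon$ for an absolute constant $C$.
   Context: A two-player perfect-information game is a finite rooted tree with states $\mathcal S$. Its leaves $\mathcal L$ carry payoffs $r_1(\ell),r_2(\ell)$ for the leader $\mathsf P_1$ and the follower $\mathsf P_2$. Non-leaf states are partitioned into leader states $\mathcal S_1$ and follower states $\mathcal S_2$, and $\mathcal C(s)$ denotes the children of $s$. The depth $D$ is the maximum number of edges on a root-to-leaf path. Approximate bounds: - Let $\tilde\pi_1^{\mathrm{grim}}$ be any fixed leader strategy (an approximate grim strategy). Let $V^{\mathrm{grim}}(s)$ be the follower's expected payoff from $s$ when the follower best responds to $\tilde\pi_1^{\mathrm{grim}}$ in the subgame rooted at $s$. - Let $\tilde\pi^{\mathrm{alt}}$ be any fixed joint strategy (an approximate joint altruistic strategy), and let $V^{\mathrm{alt}}(s)$ be the follower's expected payoff from $s$ under it. For leaves, both quantities equal $r_2(\ell)$. -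 For $s\in\mathcal S_2$ and $s'\in\mathcal C(s)$, let $\tilde\tau(s')=\max_{s^!\in\mathcal C(s),s^!\ne s'}V^{\mathrm{grim}}(s^!)$. Let $\tilde\beta(s')=\tilde\tau(s')$ if the parent of $s'$ is in $\mathcal S_2$, and $-\infty$ if it is in $\mathcal S_1$. Operators, for $g:\mathbb R\to\mathbb R\cup\{-\infty\}$: - $\bigwedge_i g_i$ is the upper concave envelope, the pointwise infimum of all concave $h\ge\max_i g_i$; - $[g\triangleright t](\mu)=g(\mu)$ if $\mu\ge t$ and $-\infty$ otherwise. Learned EPFs: for a leaf, $\tilde U_\ell(\mu)=r_1(\ell)$ if $\mu=r_2(\ell)$ and $-\infty$ otherwise. For each non-leaf $s$, $\tilde U_s$ is piecewise linear, the linear interpolation of finitely many points with $x$-coordinates in $[V^{\mathrm{grim}}(s),V^{\mathrm{alt}}(s)]$ including both endpoints. It is real-valued there and $-\infty$ outside. The target is $\tilde U^{\mathrm{target}}_s=\bigwedge_{s'\in\mathcal C(s)}(\tilde U_{s'}\triangleright\tilde\beta(s'))$ for non-leaf $s$, and $\tilde U_\ell$ for leaves. The loss is $L_\infty(f,g)=\sup_\mu|f(\mu)-g(\mu)|$, with $|(-\infty)-(-\infty)|=0$. Induced strategy $\tilde\pi$: start at the root with promise $\mu_{\mathrm{root}}\in\arg\max\tilde U_{\mathrm{root}}$. At a non-leaf $s$ with promise $\mu$, pick a maximizer $(s',s'',t,\mu',\mu'')$, over $s',s''\in\mathcal C(s)$, $t\in[0,1]$ with $t\mu'+(1-t)\mu''=\mu$,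 of $t[\tilde U_{s'}\triangleright\tilde\beta(s')](\mu')+(1-t)[\tilde U_{s''}\triangleright\tilde\beta(s'')](\mu'')$. Move to $s'$ with probability $t$ and promise $\mu'$, and to $s''$ with probability $1-t$ and promise $\mu''$. The follower follows recommendations at its states. $R_1(\tilde\pi)$ is the leader's resulting expected payoff. *)

theory Defs
  imports Complex_Main "HOL-Library.Extended_Real"
begin

definition edges :: "nat set \<Rightarrow> (nat \<Rightarrow> nat set) \<Rightarrow> (nat \<times> nat) set" where
  "edges S ch = {(s, c). s \<in> S \<and> c \<in> ch s}"

definition leaves :: "nat set \<Rightarrow> (nat \<Rightarrow> nat set) \<Rightarrow> nat set" where
  "leaves S ch = {s \<in> S. ch s = {}}"

definition game_tree :: "nat set \<Rightarrow> nat \<Rightarrow> (nat \<Rightarrow> nat set) \<Rightarrow> bool" where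
  "game_tree S rt ch \<longleftrightarrow>
     finite S \<and> rt \<in> S \<and> (\<forall>s\<in>S. ch s \<subseteq> S) \<and> (\<forall>s\<in>S. rt \<notin> ch s) \<and>
     (\<forall>c\<in>S - {rt}. \<exists>!p. p \<in> S \<and> c \<in> ch p) \<and>
     (\<forall>s\<in>S. (rt, s) \<in> (edges S ch)\<^sup>*)"

definition depth :: "nat set \<Rightarrow> nat \<Rightarrow> (nat \<Rightarrow> nat set) \<Rightarrow> nat" where
  "depth S rt ch = Max {n. \<exists>l\<in>leaves S ch. (rt, l) \<in> (edges S ch) ^^ n}"

definition behav :: "(nat \<Rightarrow> nat set) \<Rightarrow> nat set \<Rightarrow> (nat \<Rightarrow> nat \<Rightarrow> real) \<Rightarrow> bool" where
  "behav ch A \<pi> \<longleftrightarrow> (\<forall>s\<in>A. (\<forall>c\<in>ch s. 0 \<le> \<pi> s c) \<and> (\<Sum>c\<in>ch s. \<pi> s c) = 1)"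

definition concave_ext :: "(real \<Rightarrow> ereal) \<Rightarrow> bool" where
  "concave_ext h \<longleftrightarrow> (\<forall>x. h x \<noteq> \<infinity>) \<and>
     (\<forall>x y a b t. 0 \<le> t \<and> t \<le> 1 \<and> ereal a \<le> h x \<and> ereal b \<le> h y \<longrightarrow>
        ereal (t * a + (1 - t) * b) \<le> h (t * x + (1 - t) * y))"

definition uce :: "'i set \<Rightarrow> ('i \<Rightarrow> real \<Rightarrow> ereal) \<Rightarrow> real \<Rightarrow> ereal" where
  "uce I g \<mu> = (INF h \<in> {h. concave_ext h \<and> (\<forall>i\<in>I. \<forall>x. g i x \<le> h x)}. h \<mu>)"

definition thr :: "(real \<Rightarrow> ereal) \<Rightarrow> ereal \<Rightarrow> real \<Rightarrow> ereal" where
  "thr g t \<mu> = (if t \<le> ereal \<mu> then g \<mu> else -\<infinity>)"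

text \<open>Sup-distance, with |(-\<infinity>) - (-\<infinity>)| = 0.\<close>
definition Linf :: "(real \<Rightarrow> ereal) \<Rightarrow> (real \<Rightarrow> ereal) \<Rightarrow> ereal" where
  "Linf f g = (SUP \<mu>. if f \<mu> = g \<mu> then 0 else \<bar>f \<mu> - g \<mu>\<bar>)"

definition pl_interp :: "real \<Rightarrow> real \<Rightarrow> (real \<Rightarrow> real) \<Rightarrow> bool" where
  "pl_interp a b f \<longleftrightarrow> (\<exists>P. finite P \<and> a \<in> P \<and> b \<in> P \<and> P \<subseteq> {a..b} \<and>
     (\<forall>p\<in>P. \<forall>q\<in>P. p < q \<and> {p<..<q} \<inter> P = {} \<longrightarrow>
        (\<forall>x\<in>{p..q}. f x = f p + (x - p) / (q - p) * (f q - f p))))"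

text \<open>V^grim: follower's best-response value against the fixed leader strategy \<pi>g.\<close>
definition grim_value ::
  "nat set \<Rightarrow> (nat \<Rightarrow> nat set) \<Rightarrow> nat set \<Rightarrow> (nat \<Rightarrow> real) \<Rightarrow> (nat \<Rightarrow> nat \<Rightarrow> real)
     \<Rightarrow> (nat \<Rightarrow> real) \<Rightarrow> bool" where
  "grim_value S ch S1 r2 \<pi>g V \<longleftrightarrow>
     (\<forall>l\<in>leaves S ch. V l = r2 l) \<and>
     (\<forall>s\<in>S1. V s = (\<Sum>c\<in>ch s. \<pi>g s c * V c)) \<and>
     (\<forall>s\<in>S - leaves S ch - S1. V s = Max (V ` ch s))"

definition alt_value ::
  "nat set \<Rightarrow> (nat \<Rightarrow> nat set) \<Rightarrow> (nat \<Rightarrow> real) \<Rightarrow> (nat \<Rightarrow> nat \<Rightarrow> real)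
     \<Rightarrow> (nat \<Rightarrow> real) \<Rightarrow> bool" where
  "alt_value S ch r2 \<pi>a V \<longleftrightarrow>
     (\<forall>l\<in>leaves S ch. V l = r2 l) \<and>
     (\<forall>s\<in>S - leaves S ch. V s = (\<Sum>c\<in>ch s. \<pi>a s c * V c))"

definition beta :: "(nat \<Rightarrow> nat set) \<Rightarrow> nat set \<Rightarrow> (nat \<Rightarrow> real) \<Rightarrow> nat \<Rightarrow> nat \<Rightarrow> ereal" where
  "beta ch S2 Vg s s' = (if s \<in> S2 then Sup (ereal ` Vg ` (ch s - {s'})) else -\<infinity>)"

definition target ::
  "nat set \<Rightarrow> (nat \<Rightarrow> nat set) \<Rightarrow> nat set \<Rightarrow> (nat \<Rightarrow> real) \<Rightarrow> (nat \<Rightarrow> real \<Rightarrow> ereal)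
     \<Rightarrow> nat \<Rightarrow> real \<Rightarrow> ereal" where
  "target S ch S1 Vg U s =
     (if s \<in> leaves S ch then U s
      else uce (ch s) (\<lambda>s'. thr (U s') (beta ch (S - leaves S ch - S1) Vg s s')))"

definition learned_epfs ::
  "nat set \<Rightarrow> (nat \<Rightarrow> nat set) \<Rightarrow> (nat \<Rightarrow> real) \<Rightarrow> (nat \<Rightarrow> real) \<Rightarrow> (nat \<Rightarrow> real)
     \<Rightarrow> (nat \<Rightarrow> real) \<Rightarrow> (nat \<Rightarrow> real \<Rightarrow> ereal) \<Rightarrow> bool" where
  "learned_epfs S ch r1 r2 Vg Va U \<longleftrightarrow>
     (\<forall>l\<in>leaves S ch. \<forall>\<mu>. U l \<mu> = (if \<mu> = r2 l then ereal (r1 l) else -\<infinity>)) \<and>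
     (\<forall>s\<in>S - leaves S ch. \<exists>f. pl_interp (Vg s) (Va s) f \<and>
        (\<forall>\<mu>. U s \<mu> = (if \<mu> \<in> {Vg s..Va s} then ereal (f \<mu>) else -\<infinity>)))"

type_synonym choice = "nat \<times> nat \<times> real \<times> real \<times> real"

definition feasible :: "(nat \<Rightarrow> nat set) \<Rightarrow> nat \<Rightarrow> real \<Rightarrow> choice \<Rightarrow> bool" where
  "feasible ch s \<mu> x = (case x of (s', s'', t, \<mu>', \<mu>'') \<Rightarrow>
     s' \<in> ch s \<and> s'' \<in> ch s \<and> 0 \<le> t \<and> t \<le> 1 \<and> t * \<mu>' + (1 - t) * \<mu>'' = \<mu>)"

definition objective ::
  "(nat \<Rightarrow> nat \<Rightarrow> ereal) \<Rightarrow> (nat \<Rightarrow> real \<Rightarrow> ereal) \<Rightarrow> nat \<Rightarrow> choice \<Rightarrow> ereal" where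
  "objective bt U s x = (case x of (s', s'', t, \<mu>', \<mu>'') \<Rightarrow>
     ereal t * thr (U s') (bt s s') \<mu>' + ereal (1 - t) * thr (U s'') (bt s s'') \<mu>'')"

definition induced_selection ::
  "nat set \<Rightarrow> (nat \<Rightarrow> nat set) \<Rightarrow> (nat \<Rightarrow> nat \<Rightarrow> ereal) \<Rightarrow> (nat \<Rightarrow> real \<Rightarrow> ereal)
     \<Rightarrow> (nat \<Rightarrow> real \<Rightarrow> choice) \<Rightarrow> bool" where
  "induced_selection S ch bt U sel \<longleftrightarrow>
     (\<forall>s\<in>S - leaves S ch. \<forall>\<mu>. feasible ch s \<mu> (sel s \<mu>) \<and>
        (\<forall>x. feasible ch s \<mu> x \<longrightarrow> objective bt U s x \<le> objective bt U s (sel s \<mu>)))"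

text \<open>W s \<mu>: leader's expected payoff when play starts at s with promise \<mu> and
  follows the selection sel (follower obeys recommendations).\<close>
definition leader_payoff ::
  "nat set \<Rightarrow> (nat \<Rightarrow> nat set) \<Rightarrow> (nat \<Rightarrow> real) \<Rightarrow> (nat \<Rightarrow> real \<Rightarrow> choice)
     \<Rightarrow> (nat \<Rightarrow> real \<Rightarrow> real) \<Rightarrow> bool" where
  "leader_payoff S ch r1 sel W \<longleftrightarrow>
     (\<forall>l\<in>leaves S ch. \<forall>\<mu>. W l \<mu> = r1 l) \<and>
     (\<forall>s\<in>S - leaves S ch. \<forall>\<mu>. (case sel s \<mu> of (s', s'', t, \<mu>', \<mu>'') \<Rightarrow>
        W s \<mu> = t * W s' \<mu>' + (1 - t) * W s'' \<mu>''))"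


end

theory Submission
  imports Defs
begin

text \<open>At a non-leaf state the induced strategy splits into two children with promises whose
  mixture is the current promise. On the real line the upper concave envelope of a family of
  functions is attained by such two-point mixtures (a supporting line through the envelope dominates
  the finitely many atoms involved), so the value of the chosen split is exactly the target
  EPF at the promise, which is within \<open>\<epsilon>\<close> of the learned EPF. The leader's realised
  payoff at s is the same mixture of the realised payoffs at the two children, so by induction on the
  height the realised payoff at a state with promise \<open>\<mu>\<close> differs from the learned value at \<open>\<mu>\<close> by
  at most \<open>\<epsilon>\<close> per level; at the root this gives the bound with C = 1.\<close>

section \<open>Two-point mixtures and upper concave envelopes\<close>

lemma convex_comb_abs_le:
  fixes t X Y e :: real
  assumes "0 \<le> t" "t \<le> 1" "0 < t \<Longrightarrow> \<bar>X\<bar> \<le> e" "t < 1 \<Longrightarrow> \<bar>Y\<bar> \<le> e"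
  shows "\<bar>t * X + (1 - t) * Y\<bar> \<le> e"
proof -
  consider "t = 0" | "t = 1" | "0 < t" "t < 1" using assms by linarith
  then show ?thesis
  proof cases
    case 3
    have "\<bar>t * X + (1 - t) * Y\<bar> \<le> t * \<bar>X\<bar> + (1 - t) * \<bar>Y\<bar>"
      using 3 abs_triangle_ineq[of "t * X" "(1 - t) * Y"] by (simp add: abs_mult)
    also have "\<dots> \<le> t * e + (1 - t) * e"
      using 3 assms by (intro add_mono mult_left_mono) auto
    finally show ?thesis by (simp add: algebra_simps)
  qed (use assms in auto)
qed

lemma convex_comb_le_affine:
  fixes l v1 v2 m \<sigma> p1 p2 z :: real
  assumes "0 \<le> l" "l \<le> 1" "v1 \<le> m + \<sigma> * (p1 - z)" "v2 \<le> m + \<sigma> * (p2 - z)"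
  shows "l * v1 + (1 - l) * v2 \<le> m + \<sigma> * (l * p1 + (1 - l) * p2 - z)"
proof -
  have "l * v1 + (1 - l) * v2 \<le> l * (m + \<sigma> * (p1 - z)) + (1 - l) * (m + \<sigma> * (p2 - z))"
    using assms by (intro add_mono mult_left_mono) auto
  then show ?thesis by (simp add: algebra_simps)
qed

lemma finite_sets_separated:
  fixes A B :: "real set"
  assumes "finite A" "finite B" "\<forall>a\<in>A. \<forall>b\<in>B. a \<le> b"
  shows "\<exists>\<sigma>. (\<forall>a\<in>A. a \<le> \<sigma>) \<and> (\<forall>b\<in>B. \<sigma> \<le> b)"
proof (cases "A = {}")
  case True
  then show ?thesis
    using assms by (cases "B = {}") (auto intro!: exI[of _ "Min B"])
next
  case False
  then show ?thesis using assms by (intro exI[of _ "Max A"]) auto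
qed

lemma chord_slope_le:
  fixes p q v w z m :: real
  assumes "p < z" "z < q"
    and mix: "\<And>l. 0 \<le> l \<Longrightarrow> l \<le> 1 \<Longrightarrow> l * p + (1 - l) * q = z \<Longrightarrow> l * v + (1 - l) * w \<le> m"
  shows "(w - m) / (q - z) \<le> (m - v) / (z - p)"
proof -
  define l where "l = (q - z) / (q - p)"
  have lqp: "l * (q - p) = q - z" and l01: "0 \<le> l" "l \<le> 1"
    using assms(1,2) by (simp_all add: l_def)
  then have "l * p + (1 - l) * q = z" by (simp add: algebra_simps)
  then have "(q - p) * (l * v + (1 - l) * w) \<le> (q - p) * m"
    using mix[OF l01] assms(1,2) by (intro mult_left_mono) auto
  moreover have "(q - p) * (l * v + (1 - l) * w) = l * (q - p) * v + (q - p) * w - l * (q - p) * w"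
    by (simp add: algebra_simps)
  ultimately have "(q - z) * v + (z - p) * w \<le> m * (q - p)"
    unfolding lqp by (simp add: algebra_simps)
  then have "(w - m) * (z - p) \<le> (m - v) * (q - z)" by (simp add: algebra_simps)
  then show ?thesis using assms(1,2) by (simp add: divide_simps mult.commute)
qed

text \<open>The slope \<open>\<sigma>\<close> separates the slopes from (z, m) to the points of Q right of z from those
  to the points of Q left of z.\<close>
lemma supporting_line_of_finite_set:
  fixes Q :: "(real \<times> real) set"
  assumes "finite Q"
    and mix: "\<And>p v q w l. (p, v) \<in> Q \<Longrightarrow> (q, w) \<in> Q \<Longrightarrow> 0 \<le> l \<Longrightarrow> l \<le> 1 \<Longrightarrow>
      l * p + (1 - l) * q = z \<Longrightarrow> l * v + (1 - l) * w \<le> m"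
  shows "\<exists>\<sigma>. \<forall>(p, v)\<in>Q. v \<le> m + \<sigma> * (p - z)"
proof -
  define A where "A = (\<lambda>(q, w). (w - m) / (q - z)) ` {(q, w)\<in>Q. z < q}"
  define B where "B = (\<lambda>(p, v). (m - v) / (z - p)) ` {(p, v)\<in>Q. p < z}"
  have "finite A" "finite B"
    unfolding A_def B_def by (auto intro: finite_subset[OF _ \<open>finite Q\<close>])
  moreover have "\<forall>a\<in>A. \<forall>b\<in>B. a \<le> b"
    unfolding A_def B_def using chord_slope_le mix by fastforce
  ultimately obtain \<sigma> where \<sigma>: "\<forall>a\<in>A. a \<le> \<sigma>" "\<forall>b\<in>B. \<sigma> \<le> b"
    by (metis finite_sets_separated)
  have "v \<le> m + \<sigma> * (p - z)" if "(p, v) \<in> Q" for p v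
  proof -
    consider "z < p" | "p < z" | "p = z" by linarith
    then show ?thesis
    proof cases
      case 1
      then have "(v - m) / (p - z) \<le> \<sigma>" using that \<sigma>(1) unfolding A_def by force
      then show ?thesis using 1 by (simp add: field_simps)
    next
      case 2
      then have "\<sigma> \<le> (m - v) / (z - p)" using that \<sigma>(2) unfolding B_def by force
      then show ?thesis using 2 by (simp add: field_simps)
    next
      case 3
      then show ?thesis using mix[OF that that, of 1] by simp
    qed
  qed
  then show ?thesis by auto
qed

definition mix_value :: "(nat \<Rightarrow> real \<Rightarrow> ereal) \<Rightarrow> choice \<Rightarrow> ereal" where
  "mix_value g x = (case x of (a, b, t, p, q) \<Rightarrow> ereal t * g a p + ereal (1 - t) * g b q)"

definition mix_maximizer ::
  "(nat \<Rightarrow> nat set) \<Rightarrow> nat \<Rightarrow> (nat \<Rightarrow> real \<Rightarrow> ereal) \<Rightarrow> (real \<Rightarrow> choice) \<Rightarrow> bool" where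
  "mix_maximizer ch s g sel \<longleftrightarrow>
     (\<forall>\<mu>. feasible ch s \<mu> (sel \<mu>) \<and>
        (\<forall>x. feasible ch s \<mu> x \<longrightarrow> mix_value g x \<le> mix_value g (sel \<mu>)))"

lemma objective_eq_mix_value: "objective bt U s x = mix_value (\<lambda>c. thr (U c) (bt s c)) x"
  by (simp add: objective_def mix_value_def split: prod.splits)

lemma mix_maximizerE:
  assumes "mix_maximizer ch s g sel"
  obtains a b t p q where "sel \<mu> = (a, b, t, p, q)" "a \<in> ch s" "b \<in> ch s" "0 \<le> t" "t \<le> 1"
    "t * p + (1 - t) * q = \<mu>"
proof -
  obtain a b t p q where x: "sel \<mu> = (a, b, t, p, q)" by (cases "sel \<mu>") auto
  have "feasible ch s \<mu> (sel \<mu>)" using assms unfolding mix_maximizer_def by blast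
  then show ?thesis using that x unfolding feasible_def by simp
qed

lemma mix_value_ereal: "g a p = ereal v \<Longrightarrow> g b q = ereal w \<Longrightarrow>
    mix_value g (a, b, l, p, q) = ereal (l * v + (1 - l) * w)"
  by (simp add: mix_value_def)

lemma mix_value_not_PInf:
  assumes "\<forall>c\<in>K. \<forall>p. g c p \<noteq> \<infinity>" "a \<in> K" "b \<in> K" "0 \<le> t" "t \<le> 1"
  shows "mix_value g (a, b, t, p, q) \<noteq> \<infinity>"
  using assms by (cases "g a p"; cases "g b q") (auto simp: mix_value_def ereal_mult_eq_PInfty)

text \<open>In ereal, 0 * -\<infinity> = 0: a branch of weight 0 contributes nothing even where its EPF is -\<infinity>,
  so only the branches of positive weight are known to take finite values.\<close>
lemma mix_value_eq_ereal:
  assumes g: "\<forall>c\<in>K. \<forall>p. g c p \<noteq> \<infinity>" and "a \<in> K" "b \<in> K" "0 \<le> t" "t \<le> 1"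
    and mix: "mix_value g (a, b, t, p, q) = ereal \<tau>"
  obtains v w where "0 < t \<Longrightarrow> g a p = ereal v" "t < 1 \<Longrightarrow> g b q = ereal w"
    "\<tau> = t * v + (1 - t) * w"
proof -
  consider "t = 0" | "t = 1" | "0 < t" "t < 1" using assms by linarith
  then show ?thesis
  proof cases
    case 1
    then show ?thesis using mix that[of _ \<tau>] by (simp add: mix_value_def zero_ereal_def[symmetric])
  next
    case 2
    then show ?thesis using mix that[of \<tau>] by (simp add: mix_value_def zero_ereal_def[symmetric])
  next
    case 3
    have "g a p \<noteq> \<infinity>" "g b q \<noteq> \<infinity>" using assms by auto
    then obtain v w where "g a p = ereal v" "g b q = ereal w"
      using mix 3 by (cases "g a p"; cases "g b q") (auto simp: mix_value_def)
    then show ?thesis using mix that[of v w] by (simp add: mix_value_def)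
  qed
qed

lemma mix_value_eq_ereal_finite_atoms:
  assumes g: "\<forall>c\<in>K. \<forall>p. g c p \<noteq> \<infinity>" and K: "a \<in> K" "b \<in> K" and t: "0 \<le> t" "t \<le> 1"
    and mix: "mix_value g (a, b, t, p, q) = ereal \<tau>" and \<mu>: "t * p + (1 - t) * q = \<mu>"
  obtains a' b' l p' q' v w where "a' \<in> K" "b' \<in> K" "0 \<le> l" "l \<le> 1"
    "g a' p' = ereal v" "g b' q' = ereal w" "l * p' + (1 - l) * q' = \<mu>" "l * v + (1 - l) * w = \<tau>"
proof -
  obtain v w where vw: "0 < t \<Longrightarrow> g a p = ereal v" "t < 1 \<Longrightarrow> g b q = ereal w"
    "\<tau> = t * v + (1 - t) * w"
    using mix_value_eq_ereal[OF assms(1-6)] by blast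
  consider "t = 0" | "t = 1" | "0 < t" "t < 1" using t by linarith
  then show ?thesis
  proof cases
    case 1
    then show ?thesis
      using vw K \<mu> by (intro that[where a'=b and b'=b and l=0 and p'=q and q'=q and v=w and w=w]) auto
  next
    case 2
    then show ?thesis
      using vw K \<mu> by (intro that[where a'=a and b'=a and l=1 and p'=p and q'=p and v=v and w=v]) auto
  next
    case 3
    then show ?thesis
      using vw K t \<mu> by (intro that[where a'=a and b'=b and l=t and p'=p and q'=q and v=v and w=w]) auto
  qed
qed

lemma best_mix_value_not_PInf:
  assumes "\<forall>c\<in>ch s. \<forall>p. g c p \<noteq> \<infinity>" "mix_maximizer ch s g sel"
  shows "mix_value g (sel \<mu>) \<noteq> \<infinity>"
  using mix_maximizerE[OF assms(2)] mix_value_not_PInf[OF assms(1)] by metis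

lemma best_mix_value_finite_atoms:
  assumes "\<forall>c\<in>ch s. \<forall>p. g c p \<noteq> \<infinity>" "mix_maximizer ch s g sel"
    and "mix_value g (sel \<mu>) = ereal \<tau>"
  obtains a b l p q v w where "a \<in> ch s" "b \<in> ch s" "0 \<le> l" "l \<le> 1"
    "g a p = ereal v" "g b q = ereal w" "l * p + (1 - l) * q = \<mu>" "l * v + (1 - l) * w = \<tau>"
  using mix_maximizerE[OF assms(2)] mix_value_eq_ereal_finite_atoms[OF assms(1)] assms(3) by metis

lemma mix_le_best_mix_value:
  assumes "mix_maximizer ch s g sel" "a \<in> ch s" "b \<in> ch s" "0 \<le> l" "l \<le> 1"
    "l * p + (1 - l) * q = \<mu>"
  shows "mix_value g (a, b, l, p, q) \<le> mix_value g (sel \<mu>)"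
  using assms unfolding mix_maximizer_def feasible_def by auto

lemma le_best_mix_value:
  assumes "mix_maximizer ch s g sel" "c \<in> ch s"
  shows "g c \<mu> \<le> mix_value g (sel \<mu>)"
  using mix_le_best_mix_value[OF assms assms(2), of 1 \<mu> \<mu>]
  by (simp add: mix_value_def zero_ereal_def[symmetric])

lemma mix_value_le_concave_majorant:
  assumes g: "\<forall>c\<in>K. \<forall>p. g c p \<noteq> \<infinity>" and h: "concave_ext h" "\<forall>c\<in>K. \<forall>x. g c x \<le> h x"
    and K: "a \<in> K" "b \<in> K" and t: "0 \<le> t" "t \<le> 1" and \<mu>: "t * p + (1 - t) * q = \<mu>"
  shows "mix_value g (a, b, t, p, q) \<le> h \<mu>"
proof (cases "mix_value g (a, b, t, p, q)")
  case (real \<tau>)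
  then obtain a' b' l p' q' v w where atoms: "a' \<in> K" "b' \<in> K" "0 \<le> l" "l \<le> 1"
    "g a' p' = ereal v" "g b' q' = ereal w" "l * p' + (1 - l) * q' = \<mu>" "l * v + (1 - l) * w = \<tau>"
    using mix_value_eq_ereal_finite_atoms[OF g K t _ \<mu>] by metis
  then have "ereal v \<le> h p'" "ereal w \<le> h q'" using h(2) by metis+
  then have "ereal (l * v + (1 - l) * w) \<le> h (l * p' + (1 - l) * q')"
    using h(1) atoms(3,4) unfolding concave_ext_def by blast
  then show ?thesis using atoms real by simp
next
  case PInf
  then show ?thesis using mix_value_not_PInf[OF g K t] by simp
qed simp

lemma best_mix_value_supporting_line:
  assumes sel: "mix_maximizer ch s g sel" and "finite Q"
    and atoms: "\<And>p v. (p, v) \<in> Q \<Longrightarrow> \<exists>c\<in>ch s. g c p = ereal v"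
    and m: "mix_value g (sel z) \<le> ereal m"
  shows "\<exists>\<sigma>. \<forall>(p, v)\<in>Q. v \<le> m + \<sigma> * (p - z)"
proof (rule supporting_line_of_finite_set[OF \<open>finite Q\<close>])
  fix p v q w l
  assume "(p, v) \<in> Q" "(q, w) \<in> Q" and l: "0 \<le> l" "l \<le> 1" "l * p + (1 - l) * q = z"
  then obtain c c' where "c \<in> ch s" "g c p = ereal v" "c' \<in> ch s" "g c' q = ereal w"
    using atoms by blast
  then have "ereal (l * v + (1 - l) * w) \<le> mix_value g (sel z)"
    using mix_le_best_mix_value[OF sel _ _ l] mix_value_ereal by metis
  then show "l * v + (1 - l) * w \<le> m" using m by (metis ereal_less_eq(3) order_trans)
qed

text \<open>A line through (z, m) above the four atoms realising the values at x and y is also above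
  these values.\<close>
lemma convex_comb_best_mix_values_le:
  assumes g: "\<forall>c\<in>ch s. \<forall>p. g c p \<noteq> \<infinity>" and sel: "mix_maximizer ch s g sel"
    and t: "0 \<le> t" "t \<le> 1"
    and A: "mix_value g (sel x) = ereal A" and B: "mix_value g (sel y) = ereal B"
    and m: "mix_value g (sel (t * x + (1 - t) * y)) \<le> ereal m"
  shows "t * A + (1 - t) * B \<le> m"
proof -
  define z where "z = t * x + (1 - t) * y"
  obtain a1 b1 l1 p1 q1 v1 w1 where x_atoms: "a1 \<in> ch s" "b1 \<in> ch s" "0 \<le> l1" "l1 \<le> 1"
    "g a1 p1 = ereal v1" "g b1 q1 = ereal w1" "l1 * p1 + (1 - l1) * q1 = x"
    "l1 * v1 + (1 - l1) * w1 = A"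
    using best_mix_value_finite_atoms[OF g sel A] by metis
  obtain a2 b2 l2 p2 q2 v2 w2 where y_atoms: "a2 \<in> ch s" "b2 \<in> ch s" "0 \<le> l2" "l2 \<le> 1"
    "g a2 p2 = ereal v2" "g b2 q2 = ereal w2" "l2 * p2 + (1 - l2) * q2 = y"
    "l2 * v2 + (1 - l2) * w2 = B"
    using best_mix_value_finite_atoms[OF g sel B] by metis
  define Q where "Q = {(p1, v1), (q1, w1), (p2, v2), (q2, w2)}"
  have "\<exists>\<sigma>. \<forall>(p, v)\<in>Q. v \<le> m + \<sigma> * (p - z)"
    using x_atoms y_atoms m unfolding z_def
    by (intro best_mix_value_supporting_line[OF sel]) (auto simp: Q_def)
  then obtain \<sigma> where \<sigma>: "\<forall>(p, v)\<in>Q. v \<le> m + \<sigma> * (p - z)" by blast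
  have "A \<le> m + \<sigma> * (x - z)" "B \<le> m + \<sigma> * (y - z)"
    using convex_comb_le_affine[OF x_atoms(3,4), of v1 m \<sigma> p1 z w1 q1]
      convex_comb_le_affine[OF y_atoms(3,4), of v2 m \<sigma> p2 z w2 q2]
      \<sigma> x_atoms(7,8) y_atoms(7,8) unfolding Q_def by auto
  then show ?thesis using convex_comb_le_affine[OF t] unfolding z_def by fastforce
qed

lemma concave_best_mix_value:
  assumes g: "\<forall>c\<in>ch s. \<forall>p. g c p \<noteq> \<infinity>" and sel: "mix_maximizer ch s g sel"
  shows "concave_ext (\<lambda>\<mu>. mix_value g (sel \<mu>))"
proof -
  define M where "M \<mu> = mix_value g (sel \<mu>)" for \<mu>
  have M_not_PInf: "M \<mu> \<noteq> \<infinity>" for \<mu>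
    using best_mix_value_not_PInf[OF g sel] by (simp add: M_def)
  have "ereal (t * a + (1 - t) * b) \<le> M (t * x + (1 - t) * y)"
    if t: "0 \<le> t" "t \<le> 1" and a_le: "ereal a \<le> M x" and b_le: "ereal b \<le> M y" for x y a b t
  proof -
    obtain A B where A: "M x = ereal A" and B: "M y = ereal B"
      using a_le b_le M_not_PInf by (metis ereal_cases ereal_less_eq(2) ereal_infty_less_eq(2))
    note below = convex_comb_best_mix_values_le[OF g sel t A[unfolded M_def] B[unfolded M_def]]
    have "ereal (t * A + (1 - t) * B) \<le> M (t * x + (1 - t) * y)"
    proof (cases "M (t * x + (1 - t) * y)")
      case (real m)
      then show ?thesis using below[of m] by (simp add: M_def)
    next
      case MInf
      then show ?thesis using below[of "t * A + (1 - t) * B - 1"] by (simp add: M_def)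
    qed simp
    moreover have "t * a + (1 - t) * b \<le> t * A + (1 - t) * B"
      using a_le b_le A B t by (intro add_mono mult_left_mono) auto
    ultimately show ?thesis by (meson ereal_less_eq(3) order_trans)
  qed
  then show ?thesis unfolding concave_ext_def M_def[symmetric] using M_not_PInf by blast
qed

lemma uce_eq_best_mix_value:
  assumes g: "\<forall>c\<in>ch s. \<forall>p. g c p \<noteq> \<infinity>" and sel: "mix_maximizer ch s g sel"
  shows "uce (ch s) g \<mu> = mix_value g (sel \<mu>)"
proof (rule antisym)
  show "uce (ch s) g \<mu> \<le> mix_value g (sel \<mu>)"
    unfolding uce_def
    using concave_best_mix_value[OF g sel] le_best_mix_value[OF sel]
    by (intro INF_lower2[of "\<lambda>\<mu>. mix_value g (sel \<mu>)"]) auto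
next
  obtain a b t p q where "sel \<mu> = (a, b, t, p, q)" "a \<in> ch s" "b \<in> ch s" "0 \<le> t" "t \<le> 1"
    "t * p + (1 - t) * q = \<mu>"
    using mix_maximizerE[OF sel] .
  then show "mix_value g (sel \<mu>) \<le> uce (ch s) g \<mu>"
    unfolding uce_def using mix_value_le_concave_majorant[OF g] by (intro INF_greatest) auto
qed

section \<open>Depth of a game tree\<close>

lemma root_path_in_states:
  assumes tree: "game_tree S rt ch" and "(rt, l) \<in> (edges S ch) ^^ k"
  shows "l \<in> S"
proof (cases k)
  case 0
  then show ?thesis using assms by (simp add: game_tree_def)
next
  case (Suc k')
  then obtain p where "(p, l) \<in> edges S ch" using assms(2) by (auto elim: relpow_Suc_E)
  then show ?thesis using tree unfolding edges_def game_tree_def by auto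
qed

lemma root_distance_unique:
  assumes tree: "game_tree S rt ch"
  shows "(rt, s) \<in> (edges S ch) ^^ k \<Longrightarrow> (rt, s) \<in> (edges S ch) ^^ j \<Longrightarrow> k = j"
proof (induction k arbitrary: s j)
  case 0
  then have "s = rt" by simp
  show ?case
  proof (cases j)
    case (Suc j')
    then obtain p where "p \<in> S" "rt \<in> ch p"
      using 0 \<open>s = rt\<close> by (auto elim: relpow_Suc_E simp: edges_def)
    then show ?thesis using tree unfolding game_tree_def by blast
  qed simp
next
  case (Suc k)
  then obtain p where p: "(rt, p) \<in> (edges S ch) ^^ k" "p \<in> S" "s \<in> ch p"
    by (auto elim: relpow_Suc_E simp: edges_def)
  have s: "s \<in> S" "s \<noteq> rt" using p tree unfolding game_tree_def by auto
  show ?case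
  proof (cases j)
    case 0
    then show ?thesis using Suc.prems s by simp
  next
    case (Suc j')
    then obtain p' where p': "(rt, p') \<in> (edges S ch) ^^ j'" "p' \<in> S" "s \<in> ch p'"
      using Suc.prems by (auto elim: relpow_Suc_E simp: edges_def)
    have "\<exists>!q. q \<in> S \<and> s \<in> ch q" using tree s unfolding game_tree_def by auto
    then have "p' = p" using p p' by blast
    then show ?thesis using Suc.IH[OF p(1)] p'(1) Suc by simp
  qed
qed

lemma finite_root_distances:
  assumes tree: "game_tree S rt ch"
  shows "finite {k. \<exists>l. (rt, l) \<in> (edges S ch) ^^ k}"
proof -
  let ?dist = "\<lambda>l. SOME k. (rt, l) \<in> (edges S ch) ^^ k"
  have "{k. \<exists>l. (rt, l) \<in> (edges S ch) ^^ k} \<subseteq> ?dist ` S"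
  proof
    fix k assume "k \<in> {k. \<exists>l. (rt, l) \<in> (edges S ch) ^^ k}"
    then obtain l where l: "(rt, l) \<in> (edges S ch) ^^ k" by blast
    then have "(rt, l) \<in> (edges S ch) ^^ ?dist l" by (rule someI)
    then have "k = ?dist l" using root_distance_unique[OF tree l] by blast
    moreover have "l \<in> S" using root_path_in_states[OF tree l] .
    ultimately show "k \<in> ?dist ` S" by (rule image_eqI)
  qed
  moreover have "finite S" using tree by (simp add: game_tree_def)
  ultimately show ?thesis by (rule finite_subset[OF _ finite_imageI])
qed

text \<open>The longest path from the root ends in a leaf, since otherwise it could be extended.\<close>
lemma root_distance_le_depth:
  assumes tree: "game_tree S rt ch" and "(rt, l) \<in> (edges S ch) ^^ k"
  shows "k \<le> depth S rt ch"
proof -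
  define N where "N = {k. \<exists>l. (rt, l) \<in> (edges S ch) ^^ k}"
  have N: "finite N" using finite_root_distances[OF tree] by (simp add: N_def)
  have "k \<in> N" using assms(2) by (auto simp: N_def)
  then have "Max N \<in> N" "k \<le> Max N" using N by (auto intro: Max_in)
  then obtain l0 where l0: "(rt, l0) \<in> (edges S ch) ^^ Max N" by (auto simp: N_def)
  have l0_in_S: "l0 \<in> S" using root_path_in_states[OF tree l0] .
  have "ch l0 = {}"
  proof (rule ccontr)
    assume "ch l0 \<noteq> {}"
    then obtain c where "(l0, c) \<in> edges S ch" using l0_in_S by (auto simp: edges_def)
    then have "Suc (Max N) \<in> N" using l0 by (auto simp: N_def)
    then show False using N by (meson Max_ge Suc_n_not_le_n)
  qed
  then have "Max N \<in> {n. \<exists>l\<in>leaves S ch. (rt, l) \<in> (edges S ch) ^^ n}"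
    using l0 l0_in_S by (auto simp: leaves_def)
  moreover have "{n. \<exists>l\<in>leaves S ch. (rt, l) \<in> (edges S ch) ^^ n} \<subseteq> N"
    by (auto simp: N_def)
  ultimately have "Max N \<le> depth S rt ch"
    unfolding depth_def using N by (meson Max_ge finite_subset)
  then show ?thesis using \<open>k \<le> Max N\<close> by simp
qed

section \<open>Error propagation along the induced strategy\<close>

lemma Linf_nonneg: "0 \<le> Linf f g"
proof -
  have "0 \<le> (if f 0 = g 0 then 0 else \<bar>f 0 - g 0\<bar>)" by simp
  also have "\<dots> \<le> Linf f g" unfolding Linf_def by (rule SUP_upper) simp
  finally show ?thesis .
qed

lemma Linf_le_imp_abs_diff_le:
  assumes L: "Linf f g \<le> ereal \<epsilon>" and f: "f \<mu> = ereal u" and g: "g \<mu> \<noteq> \<infinity>"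
  obtains \<tau> where "g \<mu> = ereal \<tau>" "\<bar>u - \<tau>\<bar> \<le> \<epsilon>"
proof -
  have "(if f \<mu> = g \<mu> then 0 else \<bar>f \<mu> - g \<mu>\<bar>) \<le> ereal \<epsilon>"
    using L unfolding Linf_def by (meson SUP_upper UNIV_I order_trans)
  then show ?thesis
    using f g that by (cases "g \<mu>") (auto split: if_splits)
qed

locale learned_epf_play =
  fixes S :: "nat set" and rt :: nat and ch :: "nat \<Rightarrow> nat set" and S1 :: "nat set"
    and r1 r2 Vg Va :: "nat \<Rightarrow> real" and U :: "nat \<Rightarrow> real \<Rightarrow> ereal"
    and sel :: "nat \<Rightarrow> real \<Rightarrow> choice" and W :: "nat \<Rightarrow> real \<Rightarrow> real" and \<epsilon> :: real
  assumes tree: "game_tree S rt ch"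
    and epfs: "learned_epfs S ch r1 r2 Vg Va U"
    and close: "\<forall>s\<in>S. Linf (U s) (target S ch S1 Vg U s) \<le> ereal \<epsilon>"
    and selection: "induced_selection S ch (beta ch (S - leaves S ch - S1) Vg) U sel"
    and payoff: "leader_payoff S ch r1 sel W"
begin

abbreviation thresholded :: "nat \<Rightarrow> nat \<Rightarrow> real \<Rightarrow> ereal" where
  "thresholded s c \<equiv> thr (U c) (beta ch (S - leaves S ch - S1) Vg s c)"

lemma children_in_states: "s \<in> S \<Longrightarrow> ch s \<subseteq> S"
  using tree by (simp add: game_tree_def)

lemma leaf_epf: "s \<in> leaves S ch \<Longrightarrow> U s \<mu> = (if \<mu> = r2 s then ereal (r1 s) else -\<infinity>)"
  using epfs by (simp add: learned_epfs_def)

lemma nonleaf_epf: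
  assumes "s \<in> S - leaves S ch"
  obtains f where "\<And>\<mu>. U s \<mu> = (if \<mu> \<in> {Vg s..Va s} then ereal (f \<mu>) else -\<infinity>)"
  using epfs assms unfolding learned_epfs_def by blast

lemma epf_not_PInf:
  assumes "s \<in> S"
  shows "U s \<mu> \<noteq> \<infinity>"
proof (cases "s \<in> leaves S ch")
  case True
  then show ?thesis using leaf_epf by simp
next
  case False
  then obtain f where "\<And>\<mu>. U s \<mu> = (if \<mu> \<in> {Vg s..Va s} then ereal (f \<mu>) else -\<infinity>)"
    using nonleaf_epf assms by blast
  then show ?thesis by simp
qed

lemma thresholded_not_PInf: "s \<in> S \<Longrightarrow> \<forall>c\<in>ch s. \<forall>p. thresholded s c p \<noteq> \<infinity>"
  using epf_not_PInf children_in_states by (auto simp: thr_def)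

lemma thresholded_eq_ereal: "thresholded s c p = ereal v \<Longrightarrow> U c p = ereal v"
  by (simp add: thr_def split: if_splits)

lemma epsilon_nonneg: "0 \<le> \<epsilon>"
proof -
  have "rt \<in> S" using tree by (simp add: game_tree_def)
  then have "Linf (U rt) (target S ch S1 Vg U rt) \<le> ereal \<epsilon>" using close by blast
  then show ?thesis using Linf_nonneg by (metis ereal_less_eq(5) order_trans)
qed

lemma selection_mix_maximizer:
  "s \<in> S - leaves S ch \<Longrightarrow> mix_maximizer ch s (thresholded s) (sel s)"
  using selection unfolding induced_selection_def mix_maximizer_def objective_eq_mix_value
  by blast

lemma target_eq_best_mix_value:
  assumes "s \<in> S - leaves S ch"
  shows "target S ch S1 Vg U s \<mu> = mix_value (thresholded s) (sel s \<mu>)"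
  using uce_eq_best_mix_value[OF thresholded_not_PInf selection_mix_maximizer] assms
  by (simp add: target_def)

lemma leaf_payoff_exact:
  assumes "s \<in> leaves S ch" "U s \<mu> = ereal u"
  shows "W s \<mu> = u"
  using assms leaf_epf payoff unfolding leader_payoff_def by (auto split: if_splits)

lemma payoff_at_selection:
  assumes "s \<in> S - leaves S ch" "sel s \<mu> = (c1, c2, t, p1, p2)"
  shows "W s \<mu> = t * W c1 p1 + (1 - t) * W c2 p2"
proof -
  have "\<forall>\<mu>. case sel s \<mu> of (a, b, l, p, q) \<Rightarrow> W s \<mu> = l * W a p + (1 - l) * W b q"
    using conjunct2[OF payoff[unfolded leader_payoff_def]] assms(1) by (rule bspec)
  then have "case sel s \<mu> of (a, b, l, p, q) \<Rightarrow> W s \<mu> = l * W a p + (1 - l) * W b q"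
    by (rule spec)
  then show ?thesis using assms(2) by simp
qed

lemma payoff_error_step:
  assumes s: "s \<in> S - leaves S ch" and u: "U s \<mu> = ereal u"
    and children: "\<And>c p v. c \<in> ch s \<Longrightarrow> U c p = ereal v \<Longrightarrow> \<bar>W c p - v\<bar> \<le> \<delta>"
  shows "\<bar>W s \<mu> - u\<bar> \<le> \<delta> + \<epsilon>"
proof -
  have g: "\<forall>c\<in>ch s. \<forall>p. thresholded s c p \<noteq> \<infinity>" using s thresholded_not_PInf by blast
  note sel = selection_mix_maximizer[OF s]
  obtain c1 c2 t p1 p2 where x: "sel s \<mu> = (c1, c2, t, p1, p2)" "c1 \<in> ch s" "c2 \<in> ch s"
    "0 \<le> t" "t \<le> 1" "t * p1 + (1 - t) * p2 = \<mu>"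
    by (rule mix_maximizerE[OF sel])
  have L: "Linf (U s) (target S ch S1 Vg U s) \<le> ereal \<epsilon>" using close s by blast
  have "target S ch S1 Vg U s \<mu> \<noteq> \<infinity>"
    using best_mix_value_not_PInf[OF g sel] target_eq_best_mix_value[OF s] by simp
  then obtain \<tau> where \<tau>: "target S ch S1 Vg U s \<mu> = ereal \<tau>" "\<bar>u - \<tau>\<bar> \<le> \<epsilon>"
    by (rule Linf_le_imp_abs_diff_le[OF L u])
  then have "mix_value (thresholded s) (c1, c2, t, p1, p2) = ereal \<tau>"
    using target_eq_best_mix_value[OF s] x(1) by simp
  then obtain v w where vw: "0 < t \<Longrightarrow> thresholded s c1 p1 = ereal v"
    "t < 1 \<Longrightarrow> thresholded s c2 p2 = ereal w" "\<tau> = t * v + (1 - t) * w"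
    by (rule mix_value_eq_ereal[OF g x(2-5)]) blast
  have "W s \<mu> = t * W c1 p1 + (1 - t) * W c2 p2"
    using payoff_at_selection[OF s x(1)] .
  then have "W s \<mu> - \<tau> = t * (W c1 p1 - v) + (1 - t) * (W c2 p2 - w)"
    using vw(3) by (simp add: algebra_simps)
  also have "\<bar>\<dots>\<bar> \<le> \<delta>"
    using x(2-5) vw(1,2) thresholded_eq_ereal children by (intro convex_comb_abs_le) auto
  finally show ?thesis using \<tau>(2) by linarith
qed

lemma payoff_error_le:
  assumes "s \<in> S" "\<forall>l. (s, l) \<notin> (edges S ch) ^^ Suc n" "U s \<mu> = ereal u"
  shows "\<bar>W s \<mu> - u\<bar> \<le> real n * \<epsilon>"
  using assms
proof (induction n arbitrary: s \<mu> u)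
  case 0
  then have "ch s = {}" by (auto simp: edges_def)
  then have "s \<in> leaves S ch" using 0 by (simp add: leaves_def)
  then show ?case using leaf_payoff_exact 0 by simp
next
  case (Suc n)
  show ?case
  proof (cases "s \<in> leaves S ch")
    case True
    then show ?thesis using leaf_payoff_exact Suc.prems epsilon_nonneg by simp
  next
    case False
    have "\<bar>W c p - v\<bar> \<le> real n * \<epsilon>" if c: "c \<in> ch s" and v: "U c p = ereal v" for c p v
    proof (rule Suc.IH[OF _ _ v])
      show "c \<in> S" using c children_in_states Suc.prems(1) by blast
      have "(s, c) \<in> edges S ch" using c Suc.prems(1) by (simp add: edges_def)
      then show "\<forall>l. (c, l) \<notin> (edges S ch) ^^ Suc n"
        using Suc.prems(2) by (meson relpow_Suc_I2)
    qed
    then have "\<bar>W s \<mu> - u\<bar> \<le> real n * \<epsilon> + \<epsilon>"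
      using payoff_error_step False Suc.prems by blast
    then show ?thesis by (simp add: algebra_simps)
  qed
qed

lemma epf_finite_somewhere:
  assumes "s \<in> S" "Vg s \<le> Va s"
  shows "\<exists>\<mu>. U s \<mu> \<noteq> -\<infinity>"
proof (cases "s \<in> leaves S ch")
  case True
  then have "U s (r2 s) = ereal (r1 s)" using leaf_epf by simp
  then show ?thesis by (metis MInfty_neq_ereal(1))
next
  case False
  then obtain f where "\<And>\<mu>. U s \<mu> = (if \<mu> \<in> {Vg s..Va s} then ereal (f \<mu>) else -\<infinity>)"
    using nonleaf_epf assms(1) by blast
  then show ?thesis using assms(2) by (intro exI[of _ "Vg s"]) simp
qed

lemma root_payoff_error_le:
  assumes "Vg rt \<le> Va rt" and \<mu>: "U rt \<mu> = (SUP \<mu>. U rt \<mu>)"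
  shows "\<bar>ereal (W rt \<mu>) - (SUP \<mu>. U rt \<mu>)\<bar> \<le> ereal (real (depth S rt ch) * \<epsilon>)"
proof -
  have rt: "rt \<in> S" using tree by (simp add: game_tree_def)
  obtain x where "U rt x \<noteq> -\<infinity>" using epf_finite_somewhere[OF rt assms(1)] by blast
  moreover have "U rt x \<le> U rt \<mu>" unfolding \<mu> by (rule SUP_upper) simp
  ultimately obtain u where u: "U rt \<mu> = ereal u"
    using epf_not_PInf[OF rt] by (cases "U rt \<mu>") auto
  have "\<forall>l. (rt, l) \<notin> (edges S ch) ^^ Suc (depth S rt ch)"
    using root_distance_le_depth[OF tree] by fastforce
  then have "\<bar>W rt \<mu> - u\<bar> \<le> real (depth S rt ch) * \<epsilon>" using payoff_error_le rt u by blast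
  then show ?thesis using u \<mu> by simp
qed

end

theorem theorem4:
  "\<exists>C::real. \<forall>S rt ch S1 r1 r2 \<pi>g \<pi>a Vg Va U sel W \<mu>root (\<epsilon>::real).
     game_tree S rt ch \<and> S1 \<subseteq> S - leaves S ch \<and>
     behav ch S1 \<pi>g \<and> grim_value S ch S1 r2 \<pi>g Vg \<and>
     behav ch (S - leaves S ch) \<pi>a \<and> alt_value S ch r2 \<pi>a Va \<and>
     (\<forall>s\<in>S. Vg s \<le> Va s) \<and>
     learned_epfs S ch r1 r2 Vg Va U \<and>
     (\<forall>s\<in>S. Linf (U s) (target S ch S1 Vg U s) \<le> ereal \<epsilon>) \<and>
     induced_selection S ch (beta ch (S - leaves S ch - S1) Vg) U sel \<and>
     U rt \<mu>root = (SUP \<mu>. U rt \<mu>) \<and>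
     leader_payoff S ch r1 sel W
     \<longrightarrow> \<bar>ereal (W rt \<mu>root) - (SUP \<mu>. U rt \<mu>)\<bar>
           \<le> ereal (C * real (depth S rt ch) * \<epsilon>)"
proof (rule exI[of _ 1], intro allI impI, elim conjE)
  fix S rt ch S1 r1 r2 Vg Va U sel W \<mu>root and \<epsilon> :: real
  assume tree: "game_tree S rt ch" and bounds: "\<forall>s\<in>S. Vg s \<le> Va s"
    and "learned_epfs S ch r1 r2 Vg Va U"
    and "\<forall>s\<in>S. Linf (U s) (target S ch S1 Vg U s) \<le> ereal \<epsilon>"
    and "induced_selection S ch (beta ch (S - leaves S ch - S1) Vg) U sel"
    and root: "U rt \<mu>root = (SUP \<mu>. U rt \<mu>)" and "leader_payoff S ch r1 sel W"
  then interpret learned_epf_play S rt ch S1 r1 r2 Vg Va U sel W \<epsilon>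
    by unfold_locales
  \<comment> \<open>How Vg and Va arise is irrelevant; Vg rt \<le> Va rt only makes U rt finite somewhere.\<close>
  have "Vg rt \<le> Va rt" using tree bounds by (simp add: game_tree_def)
  then show "\<bar>ereal (W rt \<mu>root) - (SUP \<mu>. U rt \<mu>)\<bar> \<le> ereal (1 * real (depth S rt ch) * \<epsilon>)"
    using root_payoff_error_le root by simp
qed

end
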